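(* For every integer $n\ge0$, $$A_{2n+1}(p,-1)=\Big(\frac{p-1}{2}\Big)^nE_{2n+1},\qquad A_{2n+2}(p,-1)=\frac{p+1}{2}\Big(\frac{p-1}{2}\Big)^nE_{2n+3}.$$
   Context: For a permutation $\pi=a_1\cdots a_n$ of $[n]$, an index $i\in[n-1]$ is a descent if $a_i>a_{i+1}$; $\mathrm{odes}(\pi)$ and $\mathrm{edes}(\pi)$ count descents at odd and even positions. $A_n(p,q)=\sum_{\pi\in\mathfrak S_n}p^{\mathrm{odes}(\pi)}q^{\mathrm{edes}(\pi)}$. $E_n$ is the Euler number, the number of alternating permutations $a_1>a_2<a_3>\cdots$ in $\mathfrak S_n$; $\sum_{n\ge0}E_nt^n/n!=\tan t+\sec t$. *)

theory Defs
  imports Main "HOL-Combinatorics.Multiset_Permutations" Complex_Main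
begin

(* A permutation a_1 ... a_n of [n] is a list xs with set xs = {1..n}, distinct;
   a_i is xs ! (i - 1). Index i in [n-1] is a descent iff a_i > a_{i+1}. *)
definition is_descent :: "nat list \<Rightarrow> nat \<Rightarrow> bool" where
  "is_descent xs i \<longleftrightarrow> 1 \<le> i \<and> i < length xs \<and> xs ! (i - 1) > xs ! i"

definition odes :: "nat list \<Rightarrow> nat" where
  "odes xs = card {i. is_descent xs i \<and> odd i}"

definition edes :: "nat list \<Rightarrow> nat" where
  "edes xs = card {i. is_descent xs i \<and> even i}"

definition A :: "nat \<Rightarrow> real \<Rightarrow> real \<Rightarrow> real" where
  "A n p q = (\<Sum>\<pi>\<in>permutations_of_set {1..n}. p ^ odes \<pi> * q ^ edes \<pi>)"

definition alternating :: "nat list \<Rightarrow> bool" where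
  "alternating xs \<longleftrightarrow> (\<forall>i. 1 \<le> i \<and> i < length xs \<longrightarrow>
      (if odd i then xs ! (i - 1) > xs ! i else xs ! (i - 1) < xs ! i))"

definition Euler_num :: "nat \<Rightarrow> nat" where
  "Euler_num n = card {\<pi>\<in>permutations_of_set {1..n}. alternating \<pi>}"

end

theory Submission
  imports Defs
begin

text \<open>
  Write a permutation of \<open>{1..n+1}\<close> as \<open>l @ (n+1) # r\<close>. The lists \<open>l\<close> and \<open>r\<close> are arbitrary
  permutations of complementary sets, position \<open>|l|\<close> is an ascent and position \<open>|l|+1\<close> a descent,
  and the remaining descents are those of \<open>l\<close> and those of \<open>r\<close> moved \<open>|l|+1\<close> places to the
  right. So if every position contributes a factor depending on the position and on whether it is
  a descent, the totals \<open>G(s, n)\<close> over all permutations of \<open>{1..n}\<close>, with positions offset by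
  \<open>s\<close>, satisfy a binomial recurrence expressing \<open>G(s, n+1)\<close> through \<open>G(s, k)\<close> and
  \<open>G(s+k+1, n-k)\<close>.

  For the factor \<open>p\<close> at odd and \<open>-1\<close> at even descents, \<open>G(0, n) = A n p (-1)\<close> and
  \<open>G(1, n) = A n (-1) p\<close>, and the recurrence couples the two. For the indicator of alternation it
  yields the Euler recurrence: \<open>E(n+1)\<close> is the sum of \<open>(n choose k) E(k) E(n-k)\<close> over odd \<open>k\<close>.
  The claimed closed forms satisfy the coupled recurrences, by the Euler recurrence and, for odd
  \<open>n\<close>, by pairing the summands \<open>k\<close> and \<open>n - k\<close>.
\<close>

section \<open>Descent weights of permutations\<close>

fun desc_weight :: "(nat \<Rightarrow> bool \<Rightarrow> 'b::comm_monoid_mult) \<Rightarrow> nat \<Rightarrow> 'a::linorder list \<Rightarrow> 'b" where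
  "desc_weight f s (x # y # xs) = f (Suc s) (y < x) * desc_weight f (Suc s) (y # xs)"
| "desc_weight f s xs = 1"

lemma desc_weight_conv_prod:
  "desc_weight f s xs = (\<Prod>i\<in>{1..<length xs}. f (s + i) (xs ! i < xs ! (i - 1)))"
proof (induction f s xs rule: desc_weight.induct)
  case (1 f s x y xs)
  then show ?case
    by (simp add: prod.atLeast_Suc_lessThan prod.shift_bounds_Suc_ivl del: prod.op_ivl_Suc)
qed simp_all

lemma desc_weight_append_Cons:
  "desc_weight f s (l @ m # r) =
     desc_weight f s l * (if l = [] then 1 else f (s + length l) (m < last l))
   * (if r = [] then 1 else f (s + length l + 1) (hd r < m)) * desc_weight f (s + length l + 1) r"
proof (induction l arbitrary: s)
  case Nil
  then show ?case by (cases r) simp_all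
next
  case (Cons x l)
  then show ?case by (cases l) (simp_all add: ac_simps)
qed

lemma desc_weight_shift: "desc_weight f (s + t) xs = desc_weight (\<lambda>j. f (j + t)) s xs"
  by (simp add: desc_weight_conv_prod ac_simps)

lemma desc_weight_map_strict_mono:
  assumes "strict_mono_on (set xs) g"
  shows "desc_weight f s (map g xs) = desc_weight f s xs"
  using assms by (auto simp: desc_weight_conv_prod strict_mono_on_less intro!: prod.cong)

lemma desc_weight_map_antimono:
  assumes "distinct xs" and "\<And>x y. x \<in> set xs \<Longrightarrow> y \<in> set xs \<Longrightarrow> x < y \<Longrightarrow> g y < g x"
  shows "desc_weight f s (map g xs) = desc_weight (\<lambda>j b. f j (\<not> b)) s xs"
  unfolding desc_weight_conv_prod
proof (rule prod.cong)
  fix i assume i: "i \<in> {1..<length xs}"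
  then have "xs ! i \<noteq> xs ! (i - 1)" using assms(1) by (auto simp: nth_eq_iff_index_eq)
  then have "(g (xs ! i) < g (xs ! (i - 1))) = (\<not> xs ! i < xs ! (i - 1))"
    using i assms(2)[of "xs ! i" "xs ! (i - 1)"] assms(2)[of "xs ! (i - 1)" "xs ! i"]
    by (auto simp: linorder_neq_iff)
  then show "f (s + i) (map g xs ! i < map g xs ! (i - 1)) = f (s + i) (\<not> xs ! i < xs ! (i - 1))"
    using i by auto
qed simp

definition desc_sum :: "(nat \<Rightarrow> bool \<Rightarrow> 'b::comm_semiring_1) \<Rightarrow> nat \<Rightarrow> 'a::linorder set \<Rightarrow> 'b" where
  "desc_sum f s X = (\<Sum>xs\<in>permutations_of_set X. desc_weight f s xs)"

lemma desc_sum_image: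
  assumes "inj_on g X"
    and "\<And>xs. xs \<in> permutations_of_set X \<Longrightarrow> desc_weight f s (map g xs) = desc_weight f' s xs"
  shows "desc_sum f s (g ` X) = desc_sum f' s X"
proof -
  have "inj_on (map g) (permutations_of_set X)"
    using inj_on_map_lists[OF assms(1)] permutations_of_set_lists by (rule inj_on_subset)
  then show ?thesis
    unfolding desc_sum_def permutations_of_set_image_inj[OF assms(1)]
    by (simp add: sum.reindex assms(2))
qed

lemma desc_sum_card:
  assumes "finite X"
  shows "desc_sum f s X = desc_sum f s {1..card X}"
proof -
  define xs where "xs = sorted_list_of_set X"
  define g where "g i = xs ! (i - 1)" for i
  have sorted: "sorted_wrt (<) xs" and len: "length xs = card X" and set: "set xs = X"
    using assms by (simp_all add: xs_def)
  have "strict_mono_on {1..card X} g"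
    using sorted len by (auto simp: strict_mono_on_def g_def intro: sorted_wrt_nth_less)
  moreover have "g ` {1..card X} = X"
  proof
    show "g ` {1..card X} \<subseteq> X"
      using len by (auto simp: g_def set[symmetric])
    show "X \<subseteq> g ` {1..card X}"
    proof
      fix x assume "x \<in> X"
      then obtain i where "i < length xs" "x = xs ! i"
        by (metis set in_set_conv_nth)
      then show "x \<in> g ` {1..card X}"
        using len by (auto simp: g_def image_iff intro!: bexI[of _ "Suc i"])
    qed
  qed
  ultimately show ?thesis
    using desc_sum_image[of g "{1..card X}" f s f]
    by (metis strict_mono_on_imp_inj_on desc_weight_map_strict_mono permutations_of_setD(1))
qed

lemma desc_sum_compl:
  fixes n :: nat
  shows "desc_sum (\<lambda>j b. f j (\<not> b)) s {1..n} = desc_sum f s {1..n}"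
proof -
  have "(\<lambda>x. Suc n - x) ` {1..n} = {1..n}"
  proof
    show "{1..n} \<subseteq> (\<lambda>x. Suc n - x) ` {1..n}"
    proof
      fix x assume "x \<in> {1..n}"
      then show "x \<in> (\<lambda>x. Suc n - x) ` {1..n}"
        by (intro image_eqI[of _ _ "Suc n - x"]) auto
    qed
  qed auto
  moreover have "inj_on (\<lambda>x. Suc n - x) {1..n}"
    by (auto simp: inj_on_def)
  moreover have "desc_weight (\<lambda>j b. f j (\<not> b)) s (map (\<lambda>x. Suc n - x) xs) = desc_weight f s xs"
    if "xs \<in> permutations_of_set {1..n}" for xs
    using that by (subst desc_weight_map_antimono) (auto simp: permutations_of_set_def)
  ultimately show ?thesis
    using desc_sum_image[of "\<lambda>x. Suc n - x" "{1..n}" "\<lambda>j b. f j (\<not> b)" s f] by simp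
qed

lemma desc_sum_shift: "desc_sum f (s + t) X = desc_sum (\<lambda>j. f (j + t)) s X"
  by (simp add: desc_sum_def desc_weight_shift)

lemma desc_sum_periodic:
  assumes "\<And>j. f (j + 2) = f j"
  shows "desc_sum f s X = desc_sum f (s mod 2) X"
proof -
  have periodic: "f (j + 2 * q) = f j" for j q
  proof (induction q)
    case (Suc q)
    have "f (j + 2 * Suc q) = f (j + 2 * q + 2)" by simp
    then show ?case using assms Suc by simp
  qed simp
  then have "desc_weight f s xs = desc_weight f (s mod 2) xs" for xs
    using desc_weight_shift[of f "s mod 2" "2 * (s div 2)" xs] by (simp add: periodic)
  then show ?thesis
    unfolding desc_sum_def by (intro sum.cong) simp_all
qed

section \<open>Splitting a permutation at its maximum\<close>

lemma sum_Pow_by_card: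
  fixes \<phi> :: "nat \<Rightarrow> 'a::comm_semiring_1"
  assumes "finite B"
  shows "(\<Sum>S\<in>Pow B. \<phi> (card S)) = (\<Sum>k\<le>card B. of_nat (card B choose k) * \<phi> k)"
proof -
  have "(\<Sum>S\<in>Pow B. \<phi> (card S)) = (\<Sum>k\<le>card B. \<Sum>S\<in>{S. S \<in> Pow B \<and> card S = k}. \<phi> (card S))"
    using assms by (intro sum.group[symmetric]) (auto intro: card_mono)
  also have "\<dots> = (\<Sum>k\<le>card B. of_nat (card B choose k) * \<phi> k)"
    using n_subsets[OF assms] by (intro sum.cong) auto
  finally show ?thesis .
qed

lemma sum_permutations_of_set_split:
  assumes "finite X" and "m \<in> X"
  shows "(\<Sum>xs\<in>permutations_of_set X. g xs) =
    (\<Sum>S\<in>Pow (X - {m}). \<Sum>l\<in>permutations_of_set S. \<Sum>r\<in>permutations_of_set (X - {m} - S). g (l @ m # r))"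
proof -
  define T where "T = (SIGMA S:Pow (X - {m}). permutations_of_set S \<times> permutations_of_set (X - {m} - S))"
  define join where "join = (\<lambda>(S :: 'a set, l, r). l @ m # r)"
  have "inj_on join T"
    unfolding inj_on_def T_def join_def permutations_of_set_def
    by (auto dest!: append_Cons_eq_iff[THEN iffD1, rotated 2])
  moreover have "join ` T = permutations_of_set X"
  proof
    show "join ` T \<subseteq> permutations_of_set X"
      using assms by (auto simp: join_def T_def permutations_of_set_def)
    show "permutations_of_set X \<subseteq> join ` T"
    proof
      fix xs assume xs: "xs \<in> permutations_of_set X"
      then obtain l r where "xs = l @ m # r"
        using assms(2) split_list by (metis permutations_of_setD(1))
      with xs have "(set l, l, r) \<in> T" and "xs = join (set l, l, r)"
        by (auto simp: T_def join_def permutations_of_set_def)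
      then show "xs \<in> join ` T" by blast
    qed
  qed
  ultimately have "(\<Sum>xs\<in>permutations_of_set X. g xs) = (\<Sum>u\<in>T. g (join u))"
    using sum.reindex[of join T g] by simp
  also have "\<dots> = (\<Sum>(S, l, r)\<in>T. g (l @ m # r))"
    by (simp add: join_def case_prod_unfold)
  also have "\<dots> = (\<Sum>S\<in>Pow (X - {m}).
      \<Sum>lr\<in>permutations_of_set S \<times> permutations_of_set (X - {m} - S). (\<lambda>(l, r). g (l @ m # r)) lr)"
    using assms(1) unfolding T_def by (subst sum.Sigma) (auto simp: split_def)
  also have "\<dots> = (\<Sum>S\<in>Pow (X - {m}). \<Sum>l\<in>permutations_of_set S. \<Sum>r\<in>permutations_of_set (X - {m} - S). g (l @ m # r))"
    by (simp add: sum.cartesian_product)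
  finally show ?thesis .
qed

lemma desc_weight_split_max:
  assumes S: "S \<subseteq> {1..n}"
    and l: "l \<in> permutations_of_set S" and r: "r \<in> permutations_of_set ({1..n} - S)"
  shows "desc_weight f s (l @ Suc n # r) =
    desc_weight f s l * (if card S = 0 then 1 else f (s + card S) False)
    * (if card S = n then 1 else f (s + card S + 1) True) * desc_weight f (s + card S + 1) r"
proof -
  have len: "length l = card S" and set_l: "set l = S" and set_r: "set r = {1..n} - S"
    using l r by (auto simp: permutations_of_set_def distinct_card)
  have "finite S" using S finite_subset by blast
  then have "l = [] \<longleftrightarrow> card S = 0" by (simp flip: set_l)
  moreover have "r = [] \<longleftrightarrow> card S = n"
    using S set_r card_subset_eq[of "{1..n}" S] by fastforce
  moreover have "card S \<le> n"
    using S card_mono[of "{1..n}" S] by simp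
  moreover have "\<not> Suc n < last l" if "l \<noteq> []"
    using S last_in_set[OF that] set_l by fastforce
  moreover have "hd r < Suc n" if "r \<noteq> []"
    using hd_in_set[OF that] set_r by fastforce
  ultimately show ?thesis
    by (simp add: desc_weight_append_Cons len mult.assoc)
qed

lemma desc_sum_Suc:
  "desc_sum f s {1..Suc n} =
    (\<Sum>k\<le>n. of_nat (n choose k) * desc_sum f s {1..k} * (if k = 0 then 1 else f (s + k) False)
       * (if k = n then 1 else f (s + k + 1) True) * desc_sum f (s + k + 1) {1..n - k})"
proof -
  define c where "c k = (if k = 0 then 1 else f (s + k) False) * (if k = n then 1 else f (s + k + 1) True)" for k
  have "{1..Suc n} - {Suc n} = {1..n}" by auto
  then have "desc_sum f s {1..Suc n} = (\<Sum>S\<in>Pow {1..n}. \<Sum>l\<in>permutations_of_set S.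
      \<Sum>r\<in>permutations_of_set ({1..n} - S). desc_weight f s (l @ Suc n # r))"
    unfolding desc_sum_def using sum_permutations_of_set_split[of "{1..Suc n}" "Suc n" "desc_weight f s"]
    by simp
  also have "\<dots> = (\<Sum>S\<in>Pow {1..n}. \<Sum>l\<in>permutations_of_set S.
      \<Sum>r\<in>permutations_of_set ({1..n} - S). desc_weight f s l * c (card S) * desc_weight f (s + card S + 1) r)"
    by (intro sum.cong refl) (simp add: desc_weight_split_max c_def mult.assoc)
  also have "\<dots> = (\<Sum>S\<in>Pow {1..n}. desc_sum f s S * c (card S) * desc_sum f (s + card S + 1) ({1..n} - S))"
    unfolding desc_sum_def sum_distrib_right by (simp only: sum_distrib_left)
  also have "\<dots> = (\<Sum>S\<in>Pow {1..n}. desc_sum f s {1..card S} * c (card S) * desc_sum f (s + card S + 1) {1..n - card S})"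
  proof (intro sum.cong refl)
    fix S assume "S \<in> Pow {1..n}"
    then have "finite S" and "card ({1..n} - S) = n - card S"
      by (auto simp: finite_subset card_Diff_subset)
    then show "desc_sum f s S * c (card S) * desc_sum f (s + card S + 1) ({1..n} - S) =
        desc_sum f s {1..card S} * c (card S) * desc_sum f (s + card S + 1) {1..n - card S}"
      using desc_sum_card[of S f s] desc_sum_card[of "{1..n} - S" f "s + card S + 1"] by simp
  qed
  also have "\<dots> = (\<Sum>k\<le>n. of_nat (n choose k) * (desc_sum f s {1..k} * c k * desc_sum f (s + k + 1) {1..n - k}))"
    using sum_Pow_by_card[of "{1..n}"] by simp
  finally show ?thesis
    by (simp add: c_def mult.assoc)
qed

section \<open>Signed descents and alternating permutations\<close>

definition signed_weight :: "real \<Rightarrow> nat \<Rightarrow> bool \<Rightarrow> real" where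
  "signed_weight p j is_desc = (if is_desc then if odd j then p else -1 else 1)"

definition alt_weight :: "nat \<Rightarrow> bool \<Rightarrow> real" where
  "alt_weight j is_desc = (if is_desc = odd j then 1 else 0)"

lemma desc_weight_signed_weight: "desc_weight (signed_weight p) 0 xs = p ^ odes xs * (-1) ^ edes xs"
proof -
  define D where "D = {i. is_descent xs i}"
  have D: "D = {i \<in> {1..<length xs}. xs ! i < xs ! (i - 1)}"
    unfolding D_def is_descent_def by auto
  have "desc_weight (signed_weight p) 0 xs =
      (\<Prod>i\<in>{1..<length xs}. if xs ! i < xs ! (i - 1) then if odd i then p else -1 else 1)"
    by (simp add: desc_weight_conv_prod signed_weight_def)
  also have "\<dots> = (\<Prod>i\<in>D. if odd i then p else -1)"
    unfolding D by (rule prod.inter_filter[symmetric]) simp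
  also have "\<dots> = (\<Prod>i\<in>D \<inter> {i. odd i}. p) * (\<Prod>i\<in>D \<inter> - {i. odd i}. -1)"
    by (rule prod.If_cases) (simp add: D)
  also have "\<dots> = p ^ odes xs * (-1) ^ edes xs"
  proof -
    have "D \<inter> {i. odd i} = {i. is_descent xs i \<and> odd i}"
      and "D \<inter> - {i. odd i} = {i. is_descent xs i \<and> even i}"
      by (auto simp: D_def)
    then show ?thesis by (simp add: odes_def edes_def)
  qed
  finally show ?thesis .
qed

lemma A_eq_desc_sum: "A n p (-1) = desc_sum (signed_weight p) 0 {1..n}"
  by (simp add: A_def desc_sum_def desc_weight_signed_weight)

lemma desc_sum_signed_weight_mod2:
  "desc_sum (signed_weight p) s X = desc_sum (signed_weight p) (s mod 2) X"
  by (rule desc_sum_periodic) (simp add: signed_weight_def fun_eq_iff)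

lemma desc_weight_alt_weight:
  assumes "distinct xs"
  shows "desc_weight alt_weight 0 xs = (if alternating xs then 1 else 0)"
proof -
  have "(if odd i then xs ! (i - 1) > xs ! i else xs ! (i - 1) < xs ! i) \<longleftrightarrow> (xs ! i < xs ! (i - 1)) = odd i"
    if "1 \<le> i" "i < length xs" for i
  proof -
    have "xs ! (i - 1) \<noteq> xs ! i"
      using that assms by (auto simp: nth_eq_iff_index_eq)
    then show ?thesis by auto
  qed
  then have alt: "alternating xs \<longleftrightarrow> (\<forall>i\<in>{1..<length xs}. (xs ! i < xs ! (i - 1)) = odd i)"
    unfolding alternating_def by auto
  have "desc_weight alt_weight 0 xs = (\<Prod>i\<in>{1..<length xs}. if (xs ! i < xs ! (i - 1)) = odd i then 1 else 0)"
    by (simp add: desc_weight_conv_prod alt_weight_def)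
  also have "\<dots> = (if alternating xs then 1 else 0)"
    unfolding alt by (auto simp: prod_zero_iff)
  finally show ?thesis .
qed

abbreviation euler :: "nat \<Rightarrow> real" where
  "euler n \<equiv> real (Euler_num n)"

lemma Euler_num_eq_desc_sum: "euler n = desc_sum alt_weight s {1..n}"
proof -
  have at_0: "euler n = desc_sum alt_weight 0 {1..n}"
  proof -
    have "euler n = (\<Sum>xs\<in>permutations_of_set {1..n}. if alternating xs then 1 else 0)"
      by (simp add: Euler_num_def sum.inter_filter[symmetric])
    also have "\<dots> = desc_sum alt_weight 0 {1..n}"
      unfolding desc_sum_def
      by (intro sum.cong refl) (simp add: desc_weight_alt_weight permutations_of_set_def)
    finally show ?thesis .
  qed
  \<comment> \<open>Moving all positions by one flips the required parity; complementing the values flips it back.\<close>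
  have "(\<lambda>j. alt_weight (j + 1)) = (\<lambda>j b. alt_weight j (\<not> b))"
    by (auto simp: alt_weight_def fun_eq_iff)
  then have at_1: "desc_sum alt_weight 1 {1..n} = desc_sum alt_weight 0 {1..n}"
    using desc_sum_shift[of alt_weight 0 1 "{1..n}"] desc_sum_compl[of alt_weight 0 n] by simp
  have "desc_sum alt_weight s {1..n} = desc_sum alt_weight (s mod 2) {1..n}"
    by (rule desc_sum_periodic) (simp add: alt_weight_def fun_eq_iff)
  then show ?thesis
    using at_0 at_1 by (cases "even s") (simp_all add: mod2_eq_if)
qed

lemma Euler_num_1: "Euler_num 1 = 1"
proof -
  have "{xs \<in> permutations_of_set {1..1}. alternating xs} = {[1]}"
    by (auto simp: alternating_def)
  then show ?thesis by (simp add: Euler_num_def)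
qed

lemma Euler_num_Suc:
  assumes "1 \<le> N"
  shows "euler (Suc N) = (\<Sum>k\<le>N. if odd k then of_nat (N choose k) * euler k * euler (N - k) else 0)"
proof -
  have "euler (Suc N) = desc_sum alt_weight 1 {1..Suc N}"
    by (rule Euler_num_eq_desc_sum)
  also have "\<dots> = (\<Sum>k\<le>N. if odd k then of_nat (N choose k) * euler k * euler (N - k) else 0)"
    unfolding desc_sum_Suc using assms
    by (intro sum.cong refl) (auto simp: alt_weight_def Euler_num_eq_desc_sum[symmetric, simplified])
  finally show ?thesis .
qed

lemma sum_atMost_odd_reflect:
  fixes f :: "nat \<Rightarrow> 'a::comm_monoid_add"
  assumes "odd N"
  shows "(\<Sum>k\<le>N. f k) = (\<Sum>k\<le>N. if even k then f k + f (N - k) else 0)"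
proof -
  have "(\<Sum>k\<le>N. f k) = (\<Sum>k\<le>N. if even k then f k else 0) + (\<Sum>k\<le>N. if odd k then f k else 0)"
    by (subst sum.distrib[symmetric]) (intro sum.cong; simp)
  also have "(\<Sum>k\<le>N. if odd k then f k else 0) = (\<Sum>k\<le>N. if even k then f (N - k) else 0)"
  proof -
    have "(\<Sum>k\<le>N. if odd k then f k else 0) = (\<Sum>k\<le>N. if odd (N - k) then f (N - k) else 0)"
      by (rule sum.reindex_bij_witness[where i="\<lambda>k. N - k" and j="\<lambda>k. N - k"]) auto
    also have "\<dots> = (\<Sum>k\<le>N. if even k then f (N - k) else 0)"
      using assms by (intro sum.cong refl) (auto simp: even_diff_nat)
    finally show ?thesis .
  qed
  finally show ?thesis
    by (simp flip: sum.distrib) (intro sum.cong; simp)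
qed

lemma Euler_num_add_2:
  assumes "odd N"
  shows "euler (N + 2) = 2 * (\<Sum>k\<le>N. if even k then of_nat (N choose k) * euler (k + 1) * euler (N - k) else 0)"
proof -
  define T where "T k = (if even k then of_nat (N choose k) * euler (k + 1) * euler (N - k) else 0)" for k
  define L where "L j = (if odd j then of_nat (N choose j) * euler j * euler (Suc N - j) else 0)" for j
  define R where "R j = (if odd j then of_nat (N choose (j - 1)) * euler j * euler (Suc N - j) else 0)" for j
  have "euler (N + 2) = (\<Sum>j\<le>Suc N. if odd j then of_nat (Suc N choose j) * euler j * euler (Suc N - j) else 0)"
    using Euler_num_Suc[of "Suc N"] by simp
  also have "\<dots> = (\<Sum>j\<le>Suc N. L j) + (\<Sum>j\<le>Suc N. R j)"
    unfolding L_def R_def sum.distrib[symmetric]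
  proof (intro sum.cong refl)
    fix j
    have "odd j \<Longrightarrow> Suc N choose j = (N choose j) + (N choose (j - 1))"
      using choose_reduce_nat[of "Suc N" j] by (simp add: odd_pos)
    then show "(if odd j then of_nat (Suc N choose j) * euler j * euler (Suc N - j) else 0) =
        (if odd j then of_nat (N choose j) * euler j * euler (Suc N - j) else 0)
      + (if odd j then of_nat (N choose (j - 1)) * euler j * euler (Suc N - j) else 0)"
      by (simp add: algebra_simps)
  qed
  also have "(\<Sum>j\<le>Suc N. L j) = (\<Sum>k\<le>N. T k)"
  proof -
    have "(\<Sum>j\<le>Suc N. L j) = (\<Sum>j\<le>N. L j)"
      by (simp add: L_def)
    also have "\<dots> = (\<Sum>k\<le>N. if even k then L k + L (N - k) else 0)"
      by (rule sum_atMost_odd_reflect[OF assms])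
    also have "\<dots> = (\<Sum>k\<le>N. T k)"
      using assms by (intro sum.cong refl)
        (auto simp: L_def T_def even_diff_nat binomial_symmetric[symmetric] Suc_diff_le)
    finally show ?thesis .
  qed
  also have "(\<Sum>j\<le>Suc N. R j) = (\<Sum>k\<le>N. T k)"
    by (simp add: sum.atMost_Suc_shift R_def T_def del: sum.atMost_Suc cong: if_cong)
  finally show ?thesis
    by (simp add: T_def)
qed

section \<open>The closed forms\<close>

text \<open>The closed forms of \<open>desc_sum (signed_weight p) s {1..n}\<close> for \<open>s = 0\<close> and \<open>s = 1\<close>, that is,
  of \<open>A n p (-1)\<close> and \<open>A n (-1) p\<close>.\<close>

definition A_form :: "real \<Rightarrow> nat \<Rightarrow> real" where
  "A_form p n = (if n = 0 then 1 else if odd n then ((p - 1) / 2) ^ (n div 2) * euler n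
     else (p + 1) / 2 * ((p - 1) / 2) ^ (n div 2 - 1) * euler (n + 1))"

definition A_form_swap :: "real \<Rightarrow> nat \<Rightarrow> real" where
  "A_form_swap p n = (if n = 0 then 1 else if odd n then ((p - 1) / 2) ^ (n div 2) * euler n else 0)"

lemma A_form_odd: "odd n \<Longrightarrow> A_form p n = ((p - 1) / 2) ^ (n div 2) * euler n"
  by (auto simp: A_form_def)

lemma A_form_even:
  "even n \<Longrightarrow> n \<noteq> 0 \<Longrightarrow> A_form p n = (p + 1) / 2 * ((p - 1) / 2) ^ (n div 2 - 1) * euler (n + 1)"
  by (simp add: A_form_def)

lemma A_form_swap_odd: "odd n \<Longrightarrow> A_form_swap p n = A_form p n"
  by (auto simp: A_form_def A_form_swap_def)

lemma A_form_swap_even: "even n \<Longrightarrow> n \<noteq> 0 \<Longrightarrow> A_form_swap p n = 0"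
  by (simp add: A_form_swap_def)

lemma A_form_mult_odd:
  assumes "odd k" and "odd l"
  shows "A_form p k * A_form p l = ((p - 1) / 2) ^ ((k + l) div 2 - 1) * euler k * euler l"
proof -
  have "k div 2 + l div 2 = (k + l) div 2 - 1"
    using assms by (elim oddE) simp
  then show ?thesis
    using assms by (simp add: A_form_odd mult_ac flip: power_add)
qed

text \<open>The summands of \<open>desc_sum_Suc\<close> for \<open>signed_weight p\<close>, with the sums replaced by the closed forms.\<close>

definition A_form_term :: "real \<Rightarrow> nat \<Rightarrow> nat \<Rightarrow> real" where
  "A_form_term p N k = of_nat (N choose k) * A_form p k * (if k = N then 1 else if even k then p else -1)
     * (if even k then A_form_swap p (N - k) else A_form p (N - k))"

definition A_form_swap_term :: "real \<Rightarrow> nat \<Rightarrow> nat \<Rightarrow> real" where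
  "A_form_swap_term p N k = of_nat (N choose k) * A_form_swap p k * (if k = N then 1 else if odd k then p else -1)
     * (if even k then A_form p (N - k) else A_form_swap p (N - k))"

lemma A_form_term_pair_odd:
  assumes "odd N" and "k \<le> N" and "even k"
  shows "A_form_term p N k + A_form_term p N (N - k) =
    (p + 1) * ((p - 1) / 2) ^ (N div 2) * (of_nat (N choose k) * euler (k + 1) * euler (N - k))"
    (is "_ = (p + 1) * _ * ?T")
proof (cases "k = 0")
  case True
  then show ?thesis
    using assms odd_pos[OF assms(1)]
    by (simp add: A_form_term_def A_form_def A_form_swap_def Euler_num_1[simplified] field_simps)
next
  case False
  define c where "c = (p - 1) / 2"
  define d where "d = (p + 1) / 2"
  have "k < N"
    using assms by (cases "k = N") auto
  then have k: "odd (N - k)" "k \<noteq> N" "N - k \<noteq> N" "N - (N - k) = k" "0 < N - k"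
    using assms False by (auto simp: even_diff_nat)
  have exp: "Suc (k div 2 - 1 + (N - k) div 2) = N div 2"
    using assms False by (elim evenE oddE) simp
  have "A_form_term p N k = p * d * (c ^ (k div 2 - 1) * c ^ ((N - k) div 2)) * ?T"
    using assms k False
    by (simp add: A_form_term_def A_form_even[where p=p, folded c_def d_def]
        A_form_odd[where p=p, folded c_def] A_form_swap_odd mult_ac)
  moreover have "A_form_term p N (N - k) = - d * (c ^ (k div 2 - 1) * c ^ ((N - k) div 2)) * ?T"
    using assms k False
    by (simp add: A_form_term_def A_form_even[where p=p, folded c_def d_def]
        A_form_odd[where p=p, folded c_def] binomial_symmetric[symmetric] mult_ac)
  ultimately have "A_form_term p N k + A_form_term p N (N - k) =
      (p - 1) * (c ^ (k div 2 - 1) * c ^ ((N - k) div 2)) * d * ?T"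
    by (simp add: algebra_simps)
  also have "p - 1 = 2 * c"
    by (simp add: c_def)
  also have "2 * c * (c ^ (k div 2 - 1) * c ^ ((N - k) div 2)) = 2 * c ^ (N div 2)"
    by (simp flip: exp add: power_add)
  finally show ?thesis
    by (simp add: c_def d_def)
qed

lemma A_form_Suc_odd:
  assumes "odd N"
  shows "A_form p (Suc N) = (\<Sum>k\<le>N. A_form_term p N k)"
proof -
  define T where "T k = of_nat (N choose k) * euler (k + 1) * euler (N - k)" for k
  have "(\<Sum>k\<le>N. A_form_term p N k) = (\<Sum>k\<le>N. if even k then A_form_term p N k + A_form_term p N (N - k) else 0)"
    by (rule sum_atMost_odd_reflect[OF assms])
  also have "\<dots> = (\<Sum>k\<le>N. if even k then (p + 1) * ((p - 1) / 2) ^ (N div 2) * T k else 0)"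
    using assms by (intro sum.cong refl) (simp add: A_form_term_pair_odd T_def)
  also have "\<dots> = (p + 1) * ((p - 1) / 2) ^ (N div 2) * (\<Sum>k\<le>N. if even k then T k else 0)"
    by (subst sum_distrib_left) (intro sum.cong; simp)
  also have "\<dots> = (p + 1) / 2 * ((p - 1) / 2) ^ (N div 2) * euler (N + 2)"
    unfolding Euler_num_add_2[OF assms] T_def by simp
  also have "\<dots> = A_form p (Suc N)"
  proof -
    have "Suc N div 2 - 1 = N div 2"
      using assms by (elim oddE) simp
    then show ?thesis
      using assms by (simp add: A_form_even)
  qed
  finally show ?thesis ..
qed

lemma A_form_Suc_even:
  assumes "even N" and "N \<noteq> 0"
  shows "A_form p (Suc N) = (\<Sum>k\<le>N. A_form_term p N k)"
proof -
  define c where "c = (p - 1) / 2"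
  define M where "M = N div 2 - 1"
  define P where "P k = (if odd k then of_nat (N choose k) * euler k * euler (N - k) else 0)" for k
  have summand: "A_form_term p N k = (if k = N then A_form p N else 0) - c ^ M * P k" if k: "k \<le> N" for k
  proof -
    consider "k = N" | "even k" "k < N" | "odd k"
      using k by fastforce
    then show ?thesis
    proof cases
      case 1
      then show ?thesis
        using assms by (simp add: A_form_term_def A_form_swap_def P_def)
    next
      case 2
      then show ?thesis
        using assms by (simp add: A_form_term_def A_form_swap_even P_def)
    next
      case 3
      then have "k < N" "odd (N - k)"
        using k assms by (auto simp: even_diff_nat intro: le_neq_implies_less)
      then have "A_form p k * A_form p (N - k) = c ^ M * euler k * euler (N - k)"
        using 3 by (simp add: A_form_mult_odd c_def M_def)
      then show ?thesis
        using 3 \<open>k < N\<close> by (simp add: A_form_term_def P_def mult_ac)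
    qed
  qed
  have "(\<Sum>k\<le>N. A_form_term p N k) = A_form p N - c ^ M * (\<Sum>k\<le>N. P k)"
    by (simp add: summand sum_subtractf sum_distrib_left)
  also have "(\<Sum>k\<le>N. P k) = euler (Suc N)"
    using assms by (simp add: Euler_num_Suc P_def)
  also have "A_form p N - c ^ M * euler (Suc N) = A_form p (Suc N)"
  proof -
    have "N div 2 = Suc M" and "Suc N div 2 = N div 2"
      using assms unfolding M_def by (elim evenE; simp)+
    then show ?thesis
      using assms by (simp add: A_form_even A_form_odd c_def field_simps)
  qed
  finally show ?thesis ..
qed

lemma A_form_Suc: "A_form p (Suc N) = (\<Sum>k\<le>N. A_form_term p N k)"
proof (cases "even N")
  case True
  then show ?thesis
    using A_form_Suc_even[of N p]
    by (cases "N = 0") (simp_all add: A_form_term_def A_form_def A_form_swap_def Euler_num_1[simplified])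
next
  case False
  then show ?thesis
    by (rule A_form_Suc_odd)
qed

lemma A_form_swap_Suc_even:
  assumes "even N" and "N \<noteq> 0"
  shows "A_form_swap p (Suc N) = (\<Sum>k\<le>N. A_form_swap_term p N k)"
proof -
  define c where "c = (p - 1) / 2"
  define M where "M = N div 2 - 1"
  define P where "P k = (if odd k then of_nat (N choose k) * euler k * euler (N - k) else 0)" for k
  have summand: "A_form_swap_term p N k = p * c ^ M * P k - (if k = 0 then A_form p N else 0)"
    if k: "k \<le> N" for k
  proof -
    consider "k = 0" | "even k" "k \<noteq> 0" | "odd k"
      by blast
    then show ?thesis
    proof cases
      case 1
      then show ?thesis
        using assms by (simp add: A_form_swap_term_def A_form_swap_def P_def)
    next
      case 2
      then show ?thesis
        by (simp add: A_form_swap_term_def A_form_swap_even P_def)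
    next
      case 3
      then have "k < N" "odd (N - k)"
        using k assms by (auto simp: even_diff_nat intro: le_neq_implies_less)
      then have "A_form p k * A_form p (N - k) = c ^ M * euler k * euler (N - k)"
        using 3 by (simp add: A_form_mult_odd c_def M_def)
      then show ?thesis
        using 3 \<open>k < N\<close> \<open>odd (N - k)\<close> odd_pos[OF 3]
        by (simp add: A_form_swap_term_def A_form_swap_odd P_def mult_ac)
    qed
  qed
  have "(\<Sum>k\<le>N. A_form_swap_term p N k) = p * c ^ M * (\<Sum>k\<le>N. P k) - A_form p N"
    by (simp add: summand sum_subtractf sum_distrib_left)
  also have "(\<Sum>k\<le>N. P k) = euler (Suc N)"
    using assms by (simp add: Euler_num_Suc P_def)
  also have "p * c ^ M * euler (Suc N) - A_form p N = A_form_swap p (Suc N)"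
  proof -
    have "N div 2 = Suc M" and "Suc N div 2 = N div 2"
      using assms unfolding M_def by (elim evenE; simp)+
    then show ?thesis
      using assms by (simp add: A_form_even A_form_swap_odd A_form_odd c_def field_simps)
  qed
  finally show ?thesis ..
qed

lemma A_form_swap_Suc: "A_form_swap p (Suc N) = (\<Sum>k\<le>N. A_form_swap_term p N k)"
proof (cases "even N")
  case True
  then show ?thesis
    using A_form_swap_Suc_even[of N p]
    by (cases "N = 0") (simp_all add: A_form_swap_term_def A_form_def A_form_swap_def Euler_num_1[simplified])
next
  case False
  have pair: "A_form_swap_term p N k + A_form_swap_term p N (N - k) = 0" if "k \<le> N" "even k" for k
  proof (cases "k = 0")
    case True
    then show ?thesis
      using False odd_pos[of N] by (simp add: A_form_swap_term_def A_form_swap_odd A_form_odd A_form_swap_def)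
  next
    case k: False
    then have "odd (N - k)" "k \<noteq> N"
      using that False by (auto simp: even_diff_nat)
    then show ?thesis
      using that k by (simp add: A_form_swap_term_def A_form_swap_even)
  qed
  have "(\<Sum>k\<le>N. A_form_swap_term p N k) = 0"
    unfolding sum_atMost_odd_reflect[OF False, of "A_form_swap_term p N"]
    by (intro sum.neutral) (simp add: pair)
  then show ?thesis
    using False by (simp add: A_form_swap_even)
qed

lemma desc_sum_signed_weight:
  "desc_sum (signed_weight p) 0 {1..n} = A_form p n \<and> desc_sum (signed_weight p) 1 {1..n} = A_form_swap p n"
proof (induction n rule: less_induct)
  case (less n)
  show ?case
  proof (cases n)
    case 0
    then show ?thesis
      by (simp add: desc_sum_def A_form_def A_form_swap_def)
  next
    case (Suc N)
    have IH: "desc_sum (signed_weight p) s {1..k} = (if even s then A_form p k else A_form_swap p k)"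
      if "k \<le> N" for s k
      using less.IH[of k] that Suc desc_sum_signed_weight_mod2[of p s "{1..k}"]
      by (cases "even s") (simp_all add: mod2_eq_if)
    have "desc_sum (signed_weight p) s {1..Suc N} =
        (\<Sum>k\<le>N. of_nat (N choose k) * desc_sum (signed_weight p) s {1..k}
           * (if k = N then 1 else if odd (s + k + 1) then p else -1)
           * desc_sum (signed_weight p) (s + k + 1) {1..N - k})" for s
      unfolding desc_sum_Suc by (intro sum.cong refl) (simp add: signed_weight_def)
    then show ?thesis
      unfolding Suc A_form_Suc A_form_swap_Suc A_form_term_def A_form_swap_term_def
      by (auto simp: IH[simplified] intro!: sum.cong)
  qed
qed

theorem corollary3p5:
  fixes n :: nat and p :: real
  shows "A (2*n+1) p (-1) = ((p - 1) / 2) ^ n * real (Euler_num (2*n+1))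
       \<and> A (2*n+2) p (-1) = (p + 1) / 2 * ((p - 1) / 2) ^ n * real (Euler_num (2*n+3))"
proof
  show "A (2*n+1) p (-1) = ((p - 1) / 2) ^ n * real (Euler_num (2*n+1))"
    using A_eq_desc_sum[of "2*n+1" p] desc_sum_signed_weight[of p "2*n+1"] by (simp add: A_form_odd)
  show "A (2*n+2) p (-1) = (p + 1) / 2 * ((p - 1) / 2) ^ n * real (Euler_num (2*n+3))"
    using A_eq_desc_sum[of "2*n+2" p] desc_sum_signed_weight[of p "2*n+2"] A_form_even[of "2*n+2" p]
    by (simp add: numeral_3_eq_3)
qed

end
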